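(* Let $G(z)=\sum_{n=0}^{\infty}\binom{3n}{n}\frac{2z^n}{n+1}$, $|z|<4/27$. Then \[ G(z)=\mathcal{B}_3(z)+\mathcal{B}_3(z)^2, \] where $\mathcal{B}_3(z)=\sum_{n\ge0}\binom{3n+1}{n}\frac{z^n}{3n+1}$, and $G$ satisfies the cubic equation \[ 2-z-(1+2z)G(z)+2zG(z)^2-z^2G(z)^3=0 . \]
   Context: $\mathcal{B}_3(z)=\sum_{n\ge0}\binom{3n+1}{n}\frac{z^n}{3n+1}$ denotes the generating function of the Fuss–Catalan numbers of order 3. It satisfies $\mathcal{B}_3(z)=1+z\mathcal{B}_3(z)^3$. *)

theory Defs
  imports Complex_Main
begin

definition B3 :: "complex \<Rightarrow> complex" where
  "B3 z = (\<Sum>n. of_nat ((3*n+1) choose n) * z ^ n / of_nat (3*n+1))"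

definition G :: "complex \<Rightarrow> complex" where
  "G z = (\<Sum>n. of_nat ((3*n) choose n) * (2 * z ^ n) / of_nat (n+1))"

end

(*
  B3 is the evaluation of the formal power series B with B = 1 + X B^3, which exists by Lagrange
  inversion. Differentiating the cubic equation twice with the Euler operator theta = X d/dX and
  eliminating gives linear differential equations for B and for B + B^2, i.e. first-order
  recurrences for their coefficients. The explicit coefficients of B3 and G satisfy the same
  recurrences, so the series agree. By the ratio test B has radius of convergence 4/27, so for
  |z| < 4/27 we get G(z) = b + b^2 with b = B3(z) = 1 + z b^3, and the cubic for G is an algebraic
  consequence of this.
*)

theory Submission
  imports Defs "HOL-Analysis.FPS_Convergence" "HOL-Real_Asymp.Real_Asymp"
begin

no_notation vec_nth (infixl \<open>$\<close> 90)
notation fps_nth (infixl \<open>$\<close> 75)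

definition fps_euler :: "'a::comm_ring_1 fps \<Rightarrow> 'a fps" where
  "fps_euler f = fps_X * fps_deriv f"

lemma fps_euler_nth [simp]: "fps_euler f $ n = of_nat n * f $ n"
  by (cases n) (simp_all add: fps_euler_def)

lemma fps_euler_add [simp]: "fps_euler (f + g) = fps_euler f + fps_euler g"
  by (simp add: fps_euler_def algebra_simps)

lemma fps_euler_diff [simp]: "fps_euler (f - g) = fps_euler f - fps_euler g"
  by (simp add: fps_euler_def algebra_simps)

lemma fps_euler_mult [simp]: "fps_euler (f * g) = fps_euler f * g + f * fps_euler g"
  by (simp add: fps_euler_def algebra_simps)

lemma fps_euler_1 [simp]: "fps_euler 1 = 0"
  by (simp add: fps_euler_def)

lemma fps_euler_numeral [simp]: "fps_euler (numeral k) = 0"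
  by (simp add: fps_euler_def)

lemma fps_euler_X [simp]: "fps_euler fps_X = fps_X"
  by (simp add: fps_euler_def)

lemma fps_euler_power: "fps_euler (f ^ n) = of_nat n * f ^ (n - 1) * fps_euler f"
  by (simp add: fps_euler_def fps_deriv_power fps_of_nat algebra_simps)

text \<open>T = B - 1 is the compositional inverse of X / (1 + X)^3, since T / (1 + T)^3 = X.\<close>

definition fuss_catalan3_fps :: "'a::field fps" where
  "fuss_catalan3_fps = 1 + fps_inv (fps_X * inverse ((1 + fps_X) ^ 3))"

lemma fuss_catalan3_fps_eq: "fuss_catalan3_fps = 1 + fps_X * (fuss_catalan3_fps :: 'a::field fps) ^ 3"
proof -
  define g :: "'a fps" where "g = fps_X * inverse ((1 + fps_X) ^ 3)"
  define T where "T = fps_inv g"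
  have T0: "T $ 0 = 0" by (simp add: T_def fps_inv_def)
  have "g oo T = fps_X"
    unfolding T_def by (rule fps_inv_right) (simp_all add: g_def fps_nth_power_0)
  moreover have "g oo T = T * inverse ((1 + T) ^ 3)"
    unfolding g_def
    by (simp add: fps_compose_mult_distrib[OF T0] fps_inverse_compose[OF T0]
        fps_compose_power[OF T0, symmetric] fps_compose_add_distrib T0)
  ultimately have "T * inverse ((1 + T) ^ 3) = fps_X" by simp
  moreover have "inverse ((1 + T) ^ 3) * (1 + T) ^ 3 = 1"
    by (rule inverse_mult_eq_1) (simp add: T0 fps_nth_power_0)
  ultimately have "T = fps_X * (1 + T) ^ 3"
    by (metis mult.assoc mult.right_neutral)
  then show ?thesis by (simp add: fuss_catalan3_fps_def T_def g_def)
qed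

context
  fixes B :: "'a::field_char_0 fps"
  assumes cubic: "B = 1 + fps_X * B ^ 3"
begin

lemma fps_cubic_X_mult: "fps_X * B ^ 3 = B - 1"
  by (metis cubic add_diff_cancel_left')

lemma fps_cubic_euler: "(3 - 2 * B) * fps_euler B = B ^ 2 - B"
proof -
  have "fps_euler B = fps_X * B ^ 3 + 3 * fps_X * B ^ 2 * fps_euler B"
    by (subst (1) cubic) (simp add: fps_euler_power algebra_simps)
  then show ?thesis using fps_cubic_X_mult by algebra
qed

lemma fps_cubic_euler2:
  "(3 - 2 * B) * fps_euler (fps_euler B) = (2 * B - 1) * fps_euler B + 2 * fps_euler B ^ 2"
proof -
  have "fps_euler ((3 - 2 * B) * fps_euler B) = fps_euler (B ^ 2 - B)"
    by (simp only: fps_cubic_euler)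
  then show ?thesis by (simp add: fps_euler_power algebra_simps power2_eq_square)
qed

lemma fps_cubic_factor_nonzero: "B ^ 3 * (3 - 2 * B) ^ 3 \<noteq> 0"
proof -
  have "B $ 0 = 1" by (subst cubic) simp
  then have "(B ^ 3 * (3 - 2 * B) ^ 3) $ 0 = 1"
    by (simp add: fps_mult_nth_0 fps_nth_power_0 numeral_fps_const)
  then show ?thesis by auto
qed

text \<open>Both equations below hold after multiplying by the unit B^3 (3 - 2B)^3, where they lie in the
  ideal generated by the cubic equation and the two equations above.\<close>

lemma fps_cubic_ode:
  "4 * fps_euler (fps_euler B) + 2 * fps_euler B
     = fps_X * (27 * fps_euler (fps_euler B) + 27 * fps_euler B + 6 * B)"
proof -
  have "(4 * fps_euler (fps_euler B) + 2 * fps_euler B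
          - fps_X * (27 * fps_euler (fps_euler B) + 27 * fps_euler B + 6 * B))
        * (B ^ 3 * (3 - 2 * B) ^ 3) = 0"
    using fps_cubic_X_mult fps_cubic_euler fps_cubic_euler2 by algebra
  then show ?thesis using fps_cubic_factor_nonzero by simp
qed

lemma fps_cubic_square_ode:
  defines "H \<equiv> B + B ^ 2"
  shows "4 * fps_euler (fps_euler H) + 2 * fps_euler H - 2 * H + 4
           = fps_X * (27 * fps_euler (fps_euler H) + 27 * fps_euler H + 6 * H)"
proof -
  have dH: "fps_euler H = (1 + 2 * B) * fps_euler B"
    by (simp add: H_def fps_euler_power algebra_simps)
  have ddH: "fps_euler (fps_euler H) = 2 * fps_euler B ^ 2 + (1 + 2 * B) * fps_euler (fps_euler B)"
    by (simp add: dH algebra_simps power2_eq_square)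
  have "(4 * fps_euler (fps_euler H) + 2 * fps_euler H - 2 * H + 4
          - fps_X * (27 * fps_euler (fps_euler H) + 27 * fps_euler H + 6 * H))
        * (B ^ 3 * (3 - 2 * B) ^ 3) = 0"
    unfolding ddH unfolding dH unfolding H_def
    using fps_cubic_X_mult fps_cubic_euler fps_cubic_euler2 by algebra
  then show ?thesis using fps_cubic_factor_nonzero by simp
qed

lemma fps_cubic_coeff_rec:
  "of_nat (2 * (m + 1) * (2 * m + 3)) * B $ Suc m = of_nat (3 * (3 * m + 1) * (3 * m + 2)) * B $ m"
proof -
  have "(4 * fps_euler (fps_euler B) + 2 * fps_euler B) $ Suc m
      = (fps_X * (27 * fps_euler (fps_euler B) + 27 * fps_euler B + 6 * B)) $ Suc m"
    by (simp only: fps_cubic_ode)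
  then show ?thesis by (simp add: numeral_fps_const) (simp add: algebra_simps)
qed

lemma fps_cubic_square_coeff_rec:
  defines "H \<equiv> B + B ^ 2"
  shows "of_nat (2 * (m + 2) * (2 * m + 1)) * H $ Suc m = of_nat (3 * (3 * m + 1) * (3 * m + 2)) * H $ m"
proof -
  have "(4 * fps_euler (fps_euler H) + 2 * fps_euler H - 2 * H + 4) $ Suc m
      = (fps_X * (27 * fps_euler (fps_euler H) + 27 * fps_euler H + 6 * H)) $ Suc m"
    unfolding H_def by (simp only: fps_cubic_square_ode)
  then show ?thesis by (simp add: numeral_fps_const) (simp add: algebra_simps)
qed

end

definition B3_coeff :: "nat \<Rightarrow> 'a::field_char_0" where
  "B3_coeff n = of_nat ((3 * n + 1) choose n) / of_nat (3 * n + 1)"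

definition G_coeff :: "nat \<Rightarrow> 'a::field_char_0" where
  "G_coeff n = 2 * of_nat ((3 * n) choose n) / of_nat (n + 1)"

lemma B3_coeff_fact: "B3_coeff n = fact (3 * n) / (fact n * fact (2 * n + 1))"
proof -
  have "(fact (3 * n + 1) :: 'a) = of_nat (3 * n + 1) * fact (3 * n)"
    by (simp add: fact_Suc)
  moreover have "3 * n + 1 - n = 2 * n + 1" by simp
  ultimately show ?thesis
    unfolding B3_coeff_def by (subst binomial_fact) (auto simp del: of_nat_Suc of_nat_add)
qed

lemma G_coeff_fact: "G_coeff n = 2 * fact (3 * n) / (fact (Suc n) * fact (2 * n))"
proof -
  have "3 * n - n = 2 * n" by simp
  then show ?thesis
    unfolding G_coeff_def by (subst binomial_fact) (auto simp: fact_Suc field_simps)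
qed

lemma B3_coeff_rec:
  "of_nat (2 * (m + 1) * (2 * m + 3)) * B3_coeff (Suc m) = of_nat (3 * (3 * m + 1) * (3 * m + 2)) * B3_coeff m"
proof -
  have "3 * Suc m = Suc (Suc (Suc (3 * m)))" "2 * Suc m + 1 = Suc (Suc (2 * m + 1))" by simp_all
  then show ?thesis
    unfolding B3_coeff_fact times_divide_eq_right
    by (simp only: fact_Suc, subst frac_eq_eq, simp_all del: of_nat_Suc of_nat_add of_nat_mult)
      (simp only: of_nat_Suc of_nat_add of_nat_mult of_nat_numeral of_nat_1, algebra)
qed

lemma G_coeff_rec:
  "of_nat (2 * (m + 2) * (2 * m + 1)) * G_coeff (Suc m) = of_nat (3 * (3 * m + 1) * (3 * m + 2)) * G_coeff m"
proof -
  have "3 * Suc m = Suc (Suc (Suc (3 * m)))" "2 * Suc m = Suc (Suc (2 * m))" by simp_all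
  then show ?thesis
    unfolding G_coeff_fact times_divide_eq_right
    by (simp only: fact_Suc, subst frac_eq_eq, simp_all del: of_nat_Suc of_nat_add of_nat_mult)
      (simp only: of_nat_Suc of_nat_add of_nat_mult of_nat_numeral of_nat_1, algebra)
qed

lemma recurrence_unique:
  fixes a b :: "nat \<Rightarrow> 'a::ring_no_zero_divisors"
  assumes "\<And>m. p m * a (Suc m) = q m * a m" "\<And>m. p m * b (Suc m) = q m * b m"
    and "\<And>m. p m \<noteq> 0" and "a 0 = b 0"
  shows "a n = b n"
  by (induction n) (use assms in \<open>metis mult_left_cancel\<close>)+

lemma fuss_catalan3_fps_nth: "fuss_catalan3_fps $ n = (B3_coeff n :: 'a::field_char_0)"
proof (rule recurrence_unique)
  show "of_nat (2 * (m + 1) * (2 * m + 3)) * fuss_catalan3_fps $ Suc m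
          = of_nat (3 * (3 * m + 1) * (3 * m + 2)) * (fuss_catalan3_fps $ m :: 'a)" for m
    by (rule fps_cubic_coeff_rec[OF fuss_catalan3_fps_eq])
  show "fuss_catalan3_fps $ 0 = (B3_coeff 0 :: 'a)"
    by (subst fuss_catalan3_fps_eq) (simp add: B3_coeff_def)
qed (rule B3_coeff_rec, simp only: of_nat_eq_0_iff, simp)

lemma fuss_catalan3_fps_square_nth:
  "(fuss_catalan3_fps + fuss_catalan3_fps ^ 2) $ n = (G_coeff n :: 'a::field_char_0)"
proof (rule recurrence_unique)
  show "of_nat (2 * (m + 2) * (2 * m + 1)) * (fuss_catalan3_fps + fuss_catalan3_fps ^ 2) $ Suc m
          = of_nat (3 * (3 * m + 1) * (3 * m + 2)) * ((fuss_catalan3_fps + fuss_catalan3_fps ^ 2) $ m :: 'a)" for m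
    by (rule fps_cubic_square_coeff_rec[OF fuss_catalan3_fps_eq])
  show "(fuss_catalan3_fps + fuss_catalan3_fps ^ 2) $ 0 = (G_coeff 0 :: 'a)"
    by (subst (1 2) fuss_catalan3_fps_eq) (simp add: G_coeff_def fps_nth_power_0)
qed (rule G_coeff_rec, simp only: of_nat_eq_0_iff, simp)

lemma B3_coeff_nonzero: "B3_coeff n \<noteq> 0"
  unfolding B3_coeff_def by (simp only: divide_eq_0_iff of_nat_eq_0_iff binomial_eq_0_iff) simp

lemma conv_radius_B3_coeff: "conv_radius (B3_coeff :: nat \<Rightarrow> complex) = 4 / 27"
proof (rule conv_radius_ratio_limit_nonzero)
  have "norm (B3_coeff n :: complex) / norm (B3_coeff (Suc n) :: complex)
          = real (2 * (n + 1) * (2 * n + 3)) / real (3 * (3 * n + 1) * (3 * n + 2))" for n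
  proof -
    have "real (2 * (n + 1) * (2 * n + 3)) * norm (B3_coeff (Suc n) :: complex)
            = real (3 * (3 * n + 1) * (3 * n + 2)) * norm (B3_coeff n :: complex)"
      using arg_cong[OF B3_coeff_rec[of n, where 'a = complex], of norm]
      by (simp only: norm_mult norm_of_nat)
    moreover have "B3_coeff (Suc n) \<noteq> (0 :: complex)" by (rule B3_coeff_nonzero)
    ultimately show ?thesis
      by (subst frac_eq_eq) (auto simp del: of_nat_mult of_nat_add)
  qed
  moreover have "(\<lambda>n. real (2 * (n + 1) * (2 * n + 3)) / real (3 * (3 * n + 1) * (3 * n + 2)))
                   \<longlonglongrightarrow> 4 / 27"
    by real_asymp
  ultimately show "(\<lambda>n. norm (B3_coeff n :: complex) / norm (B3_coeff (Suc n) :: complex)) \<longlonglongrightarrow> 4 / 27"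
    by simp
qed simp_all

lemma fps_conv_radius_fuss_catalan3_fps: "fps_conv_radius (fuss_catalan3_fps :: complex fps) = ereal (4 / 27)"
  unfolding fps_conv_radius_def fuss_catalan3_fps_nth[abs_def] by (simp add: conv_radius_B3_coeff)

lemma B3_eq_eval_fps: "B3 z = eval_fps fuss_catalan3_fps z"
  unfolding eval_fps_def B3_def by (simp add: fuss_catalan3_fps_nth B3_coeff_def)

lemma G_eq_eval_fps: "G z = eval_fps (fuss_catalan3_fps + fuss_catalan3_fps ^ 2) z"
  unfolding eval_fps_def G_def fuss_catalan3_fps_square_nth by (simp add: G_coeff_def mult_ac)

lemma fuss_catalan3_relation_cubic:
  fixes z b :: "'a::field_char_0"
  assumes "b = 1 + z * b ^ 3"
  shows "2 - z - (1 + 2 * z) * (b + b ^ 2) + 2 * z * (b + b ^ 2) ^ 2 - z ^ 2 * (b + b ^ 2) ^ 3 = 0"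
proof -
  have "z * b ^ 3 = b - 1" using assms by (metis add_diff_cancel_left')
  then have "b * (2 - z - (1 + 2 * z) * (b + b ^ 2) + 2 * z * (b + b ^ 2) ^ 2 - z ^ 2 * (b + b ^ 2) ^ 3) = 0"
    by algebra
  moreover have "b \<noteq> 0" using assms by auto
  ultimately show ?thesis by simp
qed

theorem mainTheorem2:
  fixes z :: complex
  assumes "norm z < 4/27"
  shows "G z = B3 z + (B3 z)^2 \<and>
         2 - z - (1 + 2*z) * G z + 2*z * (G z)^2 - z^2 * (G z)^3 = 0"
proof -
  let ?B = "fuss_catalan3_fps :: complex fps"
  have "ereal (norm z) < fps_conv_radius ?B"
    using assms by (simp add: fps_conv_radius_fuss_catalan3_fps)
  then have conv: "norm z < fps_conv_radius (?B ^ n)" for n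
    using fps_conv_radius_power[of ?B n] by (rule less_le_trans)
  have "fps_conv_radius (?B ^ 3) \<le> fps_conv_radius (fps_X * ?B ^ 3)"
    using fps_conv_radius_mult[of fps_X "?B ^ 3"] by simp
  with conv[of 3] have conv_X: "norm z < fps_conv_radius (fps_X * ?B ^ 3)"
    by (rule less_le_trans)
  have G_eq: "G z = B3 z + B3 z ^ 2"
    using conv[of 1] conv[of 2]
    by (simp add: G_eq_eval_fps B3_eq_eval_fps eval_fps_add eval_fps_power)
  have "eval_fps (1 + fps_X * ?B ^ 3) z = 1 + z * B3 z ^ 3"
    using conv_X conv[of 1] conv[of 3]
    by (simp add: eval_fps_add eval_fps_mult eval_fps_power B3_eq_eval_fps)
  then have "B3 z = 1 + z * B3 z ^ 3"
    by (simp only: B3_eq_eval_fps flip: fuss_catalan3_fps_eq)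
  with G_eq show ?thesis
    using fuss_catalan3_relation_cubic by simp
qed

end
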